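(* Let $\mathfrak{l}$ be a finite-dimensional restricted Lie algebra over an algebraically closed field $\mathbb{K}$ of characteristic $p$ which is perfect, i.e. $[\mathfrak{l},\mathfrak{l}]=\mathfrak{l}$, and let $\chi\in\mathfrak{l}^\ast$. Let $\mathfrak{l}_\chi=\mathfrak{l}\oplus\mathbb{K}c$ be the restricted Lie algebra with bracket $[a+\alpha c,b+\beta c]=[a,b]$ and $p$-map $(a+\alpha c)^{[p]}=a^{[p]}+(\chi(a)^p+\alpha^p)c$. Then the central extension of restricted Lie algebras $0\to\mathbb{K}c\to\mathfrak{l}_\chi\to\mathfrak{l}\to0$ is split (i.e. there is a restricted Lie algebra homomorphism $s:\mathfrak{l}\to\mathfrak{l}_\chi$ right inverse to the projection) if and only if $\chi=0$. *)

theory Defs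
  imports "HOL-Computational_Algebra.Polynomial" "HOL-Library.Product_Plus"
begin

definition lie_algebra ::
  "('k::field \<Rightarrow> 'v::ab_group_add \<Rightarrow> 'v) \<Rightarrow> ('v \<Rightarrow> 'v \<Rightarrow> 'v) \<Rightarrow> bool" where
  "lie_algebra scale br \<longleftrightarrow>
     vector_space scale \<and>
     (\<forall>x. Vector_Spaces.linear scale scale (br x)) \<and>
     (\<forall>y. Vector_Spaces.linear scale scale (\<lambda>x. br x y)) \<and>
     (\<forall>x. br x x = 0) \<and>
     (\<forall>x y z. br x (br y z) + br y (br z x) + br z (br x y) = 0)"

text \<open>Jacobson's universal Lie polynomials: i * s_i(x,y) is the coefficient of
t^(i-1) in ad(t x + y)^(p-1) (x), i.e. the sum over all words in x,y of
length p-1 containing exactly i-1 letters x.\<close>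

definition ad_word :: "('v \<Rightarrow> 'v \<Rightarrow> 'v) \<Rightarrow> 'v \<Rightarrow> 'v \<Rightarrow> bool list \<Rightarrow> 'v \<Rightarrow> 'v" where
  "ad_word br x y bs v = foldr (\<lambda>b w. br (if b then x else y) w) bs v"

definition jacobson_s ::
  "('k::field \<Rightarrow> 'v::ab_group_add \<Rightarrow> 'v) \<Rightarrow> ('v \<Rightarrow> 'v \<Rightarrow> 'v) \<Rightarrow> nat \<Rightarrow> nat \<Rightarrow> 'v \<Rightarrow> 'v \<Rightarrow> 'v" where
  "jacobson_s scale br p i x y =
     scale (inverse (of_nat i))
       (\<Sum>bs\<in>{bs. length bs = p - 1 \<and> length (filter id bs) = i - 1}. ad_word br x y bs x)"

definition restricted_lie_algebra ::
  "('k::field \<Rightarrow> 'v::ab_group_add \<Rightarrow> 'v) \<Rightarrow> ('v \<Rightarrow> 'v \<Rightarrow> 'v) \<Rightarrow> ('v \<Rightarrow> 'v) \<Rightarrow> nat \<Rightarrow> bool" where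
  "restricted_lie_algebra scale br pm p \<longleftrightarrow>
     lie_algebra scale br \<and>
     (\<forall>a x. pm (scale a x) = scale (a ^ p) (pm x)) \<and>
     (\<forall>x. br (pm x) = (br x ^^ p)) \<and>
     (\<forall>x y. pm (x + y) = pm x + pm y + (\<Sum>i\<in>{1..p-1}. jacobson_s scale br p i x y))"

definition finite_dim_space :: "('k::field \<Rightarrow> 'v::ab_group_add \<Rightarrow> 'v) \<Rightarrow> bool" where
  "finite_dim_space scale \<longleftrightarrow> (\<exists>B. finite_dimensional_vector_space scale B)"

definition perfect_lie :: "('k::field \<Rightarrow> 'v::ab_group_add \<Rightarrow> 'v) \<Rightarrow> ('v \<Rightarrow> 'v \<Rightarrow> 'v) \<Rightarrow> bool" where
  "perfect_lie scale br \<longleftrightarrow> module.span scale {br a b | a b. True} = UNIV"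

definition restricted_lie_hom ::
  "('k::field \<Rightarrow> 'v::ab_group_add \<Rightarrow> 'v) \<Rightarrow> ('v \<Rightarrow> 'v \<Rightarrow> 'v) \<Rightarrow> ('v \<Rightarrow> 'v) \<Rightarrow>
   ('k \<Rightarrow> 'w::ab_group_add \<Rightarrow> 'w) \<Rightarrow> ('w \<Rightarrow> 'w \<Rightarrow> 'w) \<Rightarrow> ('w \<Rightarrow> 'w) \<Rightarrow> ('v \<Rightarrow> 'w) \<Rightarrow> bool" where
  "restricted_lie_hom scale1 br1 pm1 scale2 br2 pm2 f \<longleftrightarrow>
     Vector_Spaces.linear scale1 scale2 f \<and>
     (\<forall>a b. f (br1 a b) = br2 (f a) (f b)) \<and>
     (\<forall>a. f (pm1 a) = pm2 (f a))"

text \<open>The extension l_chi = l \<oplus> K c, modelled as 'v \<times> 'k, (a, alpha) = a + alpha c.\<close>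

definition ext_scale :: "('k::field \<Rightarrow> 'v \<Rightarrow> 'v) \<Rightarrow> 'k \<Rightarrow> 'v \<times> 'k \<Rightarrow> 'v \<times> 'k" where
  "ext_scale scale t u = (scale t (fst u), t * snd u)"

definition ext_br :: "('v \<Rightarrow> 'v \<Rightarrow> 'v) \<Rightarrow> 'v \<times> 'k::field \<Rightarrow> 'v \<times> 'k \<Rightarrow> 'v \<times> 'k" where
  "ext_br br u w = (br (fst u) (fst w), 0)"

definition ext_pm :: "('v \<Rightarrow> 'v) \<Rightarrow> ('v \<Rightarrow> 'k::field) \<Rightarrow> nat \<Rightarrow> 'v \<times> 'k \<Rightarrow> 'v \<times> 'k" where
  "ext_pm pm \<chi> p u = (pm (fst u), \<chi> (fst u) ^ p + snd u ^ p)"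

end

theory Submission
  imports Defs
begin

text \<open>A section of the projection has the form s(x) = x + f(x) c with f linear. Since c is
central, s preserves brackets only if f vanishes on all brackets, hence on l = [l, l].
Then s is the inclusion, and comparing the c-components of s(x^[p]) and s(x)^[p] gives
\<chi>(x)^p = 0. Conversely, for \<chi> = 0 the inclusion is a restricted homomorphism.\<close>

lemma vector_space_ext_scale:
  assumes "vector_space scale"
  shows "vector_space (ext_scale scale)"
  using assms unfolding vector_space_def ext_scale_def
  by (auto simp: algebra_simps)

lemma linear_snd_ext_scale:
  assumes "vector_space scale"
  shows "Vector_Spaces.linear (ext_scale scale) (*) snd"
proof -
  have "vector_space ((*) :: 'k::field \<Rightarrow> 'k \<Rightarrow> 'k)"
    by standard (simp_all add: algebra_simps)
  then show ?thesis
    using vector_space_ext_scale[OF assms] by (auto simp: Vector_Spaces.linear_iff ext_scale_def)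
qed

lemma linear_ext_inclusion:
  assumes "vector_space scale"
  shows "Vector_Spaces.linear scale (ext_scale scale) (\<lambda>a. (a, 0))"
proof -
  interpret vector_space scale by fact
  show ?thesis
    using vector_space_ext_scale[OF assms] vector_space_axioms
    by (auto simp: Vector_Spaces.linear_iff ext_scale_def)
qed

lemma perfect_lie_linear_vanishing_on_brackets:
  assumes "perfect_lie scale br" and f: "Vector_Spaces.linear scale scale' f"
    and brackets: "\<And>a b. f (br a b) = 0"
  shows "f x = 0"
proof (rule module_hom.eq_0_on_span[of scale scale' f])
  show "module_hom scale scale' f"
    using f by (simp add: Vector_Spaces.linear_iff_module_hom)
  show "y \<in> {br a b | a b. True} \<Longrightarrow> f y = 0" for y
    using brackets by blast
  show "x \<in> module.span scale {br a b | a b. True}"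
    using assms(1) by (simp add: perfect_lie_def)
qed

lemma snd_bracket_preserving_map_to_ext_eq_0:
  assumes "vector_space scale" and "perfect_lie scale br"
    and s: "Vector_Spaces.linear scale (ext_scale scale) s"
    and bracket: "\<And>a b. s (br a b) = ext_br br (s a) (s b)"
  shows "snd (s x) = 0"
proof -
  have "Vector_Spaces.linear scale (*) (snd \<circ> s)"
    using s linear_snd_ext_scale[OF assms(1)] by (rule Vector_Spaces.linear_compose)
  moreover have "(snd \<circ> s) (br a b) = 0" for a b
    using bracket by (simp add: ext_br_def)
  ultimately show ?thesis
    using perfect_lie_linear_vanishing_on_brackets[OF assms(2)] by (metis comp_apply)
qed

lemma restricted_lie_hom_ext_inclusion:
  assumes "vector_space scale" and "p > 0"
  shows "restricted_lie_hom scale br pm (ext_scale scale) (ext_br br) (ext_pm pm (\<lambda>_. 0) p)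
           (\<lambda>a. (a, 0))"
  using linear_ext_inclusion[OF assms(1)] assms(2)
  by (simp add: restricted_lie_hom_def ext_br_def ext_pm_def)

theorem corollary1p2p9:
  fixes scale :: "'k::alg_closed_field \<Rightarrow> 'v::ab_group_add \<Rightarrow> 'v"
    and br :: "'v \<Rightarrow> 'v \<Rightarrow> 'v"
    and pm :: "'v \<Rightarrow> 'v"
    and p :: nat
    and \<chi> :: "'v \<Rightarrow> 'k"
  assumes "prime p" and "CHAR('k) = p"
    and "restricted_lie_algebra scale br pm p"
    and "finite_dim_space scale"
    and "perfect_lie scale br"
    and "Vector_Spaces.linear scale (*) \<chi>"
  shows "(\<exists>s. restricted_lie_hom scale br pm (ext_scale scale) (ext_br br) (ext_pm pm \<chi> p) s
              \<and> (\<forall>a. fst (s a) = a))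
         \<longleftrightarrow> \<chi> = (\<lambda>_. 0)"
proof -
  have vs: "vector_space scale"
    using assms(3) by (simp add: restricted_lie_algebra_def lie_algebra_def)
  have "p > 0"
    using assms(1) prime_gt_0_nat by blast
  show ?thesis
  proof
    assume "\<exists>s. restricted_lie_hom scale br pm (ext_scale scale) (ext_br br) (ext_pm pm \<chi> p) s
              \<and> (\<forall>a. fst (s a) = a)"
    then obtain s where hom: "restricted_lie_hom scale br pm (ext_scale scale) (ext_br br)
        (ext_pm pm \<chi> p) s" and is_section: "\<forall>a. fst (s a) = a"
      by blast
    have central_free: "snd (s x) = 0" for x
      using hom by (intro snd_bracket_preserving_map_to_ext_eq_0[OF vs assms(5)])
        (auto simp: restricted_lie_hom_def)
    have "\<chi> a ^ p = 0" for a
      using hom is_section central_free[of a] central_free[of "pm a"] \<open>p > 0\<close>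
      by (auto simp: restricted_lie_hom_def ext_pm_def zero_power)
    then show "\<chi> = (\<lambda>_. 0)"
      by auto
  next
    assume "\<chi> = (\<lambda>_. 0)"
    then show "\<exists>s. restricted_lie_hom scale br pm (ext_scale scale) (ext_br br) (ext_pm pm \<chi> p) s
              \<and> (\<forall>a. fst (s a) = a)"
      using restricted_lie_hom_ext_inclusion[OF vs \<open>p > 0\<close>, of br pm] by auto
  qed
qed

end
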